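(* Let $m,n\in\mathbb{N}$ with $m\le n$. There exists $f_{n,m}\in\mathcal{NN}_{1,m+1}(2^{m+2}+1,1)$ such that for every $x=\sum_{i=1}^n2^{-i}x_i$ with $x_1,\dots,x_n\in\{0,1\}$, \[ f_{n,m}(x)=\Big(x_1,\dots,x_m,\ \sum_{i=m+1}^n 2^{m-i}x_i\Big)^\top. \] Moreover, for every $L\in\mathbb{N}$ there exists $f_{n,m,L}\in\mathcal{NN}_{1,2}(2^{\lceil m/L\rceil+2}+2,L)$ such that for every such $x$, \[ f_{n,m,L}(x)=\Big(\sum_{i=1}^m2^{m-i}x_i,\ \sum_{i=m+1}^n 2^{m-i}x_i\Big)^\top. \]
   Context: $\mathcal{NN}_{d,k}(W,L)$: set of maps $g:\mathbb{R}^d\to\mathbb{R}^k$ given by $g_0(x)=x$, $g_{\ell+1}(x)=\sigma(A_\ell g_\ell(x)+b_\ell)$ ($\ell=0,\dots,L-1$), $g(x)=A_Lg_L(x)+b_L$, with $A_\ell\in\mathbb{R}^{N_{\ell+1}\times N_\ell}$, $b_\ell\in\mathbb{R}^{N_{\ell+1}}$, $N_0=d$, $N_{L+1}=k$, $\max\{N_1,\dots,N_L\}\le W$, $\sigma(t)=\max\{t,0\}$ componentwise. In binary notation, the first output of $f_{n,m,L}$ is $\mathrm{Bin}\,x_1\cdots x_m.0$ and the last outputs are $\mathrm{Bin}\,0.x_{m+1}\cdots x_n$. *)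

theory Defs
  imports Complex_Main
begin

text \<open>Vectors in R^N are real lists of length N; a matrix in R^(N' x N) is a list of
N' rows, each a real list of length N. A layer is a pair (A, b).\<close>

definition relu_vec :: "real list \<Rightarrow> real list" where
  "relu_vec v = map (\<lambda>t. max t 0) v"

definition affine :: "real list list \<Rightarrow> real list \<Rightarrow> real list \<Rightarrow> real list" where
  "affine A b x = map (\<lambda>i. (\<Sum>j<length x. (A ! i) ! j * x ! j) + b ! i) [0..<length b]"

definition is_matrix :: "nat \<Rightarrow> nat \<Rightarrow> real list list \<Rightarrow> bool" where
  "is_matrix r c A \<longleftrightarrow> length A = r \<and> (\<forall>row \<in> set A. length row = c)"

fun realize :: "(real list list \<times> real list) list \<Rightarrow> real list \<Rightarrow> real list" where
  "realize [] x = x"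
| "realize [(A, b)] x = affine A b x"
| "realize ((A, b) # rest) x = realize rest (relu_vec (affine A b x))"

definition wf_net :: "nat \<Rightarrow> nat \<Rightarrow> nat \<Rightarrow> nat \<Rightarrow> nat list \<Rightarrow> (real list list \<times> real list) list \<Rightarrow> bool" where
  "wf_net d k W L Ns layers \<longleftrightarrow>
     length Ns = L + 2 \<and> length layers = L + 1 \<and> Ns ! 0 = d \<and> Ns ! (L + 1) = k \<and>
     (\<forall>l \<le> L. is_matrix (Ns ! (l + 1)) (Ns ! l) (fst (layers ! l)) \<and>
               length (snd (layers ! l)) = Ns ! (l + 1)) \<and>
     (\<forall>l \<in> {1..L}. Ns ! l \<le> W)"

definition NN :: "nat \<Rightarrow> nat \<Rightarrow> nat \<Rightarrow> nat \<Rightarrow> (real list \<Rightarrow> real list) set" where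
  "NN d k W L = {realize layers | layers. \<exists>Ns. wf_net d k W L Ns layers}"

end

theory Submission
  imports Defs
begin

text \<open>After reading e bits, a network carries the head
  bin_head x e = Bin x_1...x_e, an integer, and the tail bin_tail x n e = Bin 0.x_(e+1)...x_n,
  a number in [0,1) on the grid 2^-(n-e). Reading s more bits means computing floor(2^s r) for
  the tail r, and on that grid floor(2^s r) counts the thresholds k/2^s <= r, each of which is
  exactly the difference of two ReLUs of slope 2^(n-e). So one hidden layer of width 2 * 2^s
  (head, tail and 2^s - 1 ramps) advances the reading by s bits, and L such layers read m bits
  once s <= ceil(m/L). For the shallow network that outputs the bits themselves, summing only the
  thresholds k/2^m with 2^(m-j) dvd k recovers every head bin_head x j, j <= m, from the same
  layer, and x_(j+1) = bin_head x (j+1) - 2 bin_head x j.\<close>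

section \<open>Binary expansions\<close>

definition bin_head :: "(nat \<Rightarrow> real) \<Rightarrow> nat \<Rightarrow> real" where
  "bin_head x e = (\<Sum>i = 1..e. 2 powi (int e - int i) * x i)"

definition bin_tail :: "(nat \<Rightarrow> real) \<Rightarrow> nat \<Rightarrow> nat \<Rightarrow> real" where
  "bin_tail x n e = (\<Sum>i = e + 1..n. 2 powi (int e - int i) * x i)"

definition bits_upto :: "nat \<Rightarrow> (nat \<Rightarrow> real) \<Rightarrow> bool" where
  "bits_upto n x \<longleftrightarrow> (\<forall>i \<in> {1..n}. x i \<in> {0, 1})"

lemma bin_head_0 [simp]: "bin_head x 0 = 0"
  by (simp add: bin_head_def)

lemma bin_head_Suc: "bin_head x (Suc e) = 2 * bin_head x e + x (Suc e)"
proof -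
  have "2 powi (int (Suc e) - int i) = (2::real) * 2 powi (int e - int i)" for i
    using power_int_add_1[of "2::real" "int e - int i"] by (simp add: algebra_simps)
  then show ?thesis
    by (simp add: bin_head_def sum_distrib_left mult.assoc)
qed

lemma bin_tail_self [simp]: "bin_tail x n n = 0"
  by (simp add: bin_tail_def)

lemma bin_tail_Suc:
  assumes "e < n"
  shows "bin_tail x n e = (x (Suc e) + bin_tail x n (Suc e)) / 2"
proof -
  have shift: "2 powi (int e - int i) = (2 powi (int (Suc e) - int i)) / (2::real)" for i
    using power_int_add_1[of "2::real" "int e - int i"] by (simp add: algebra_simps)
  have "bin_tail x n e = x (Suc e) / 2 + (\<Sum>i = Suc (Suc e)..n. 2 powi (int e - int i) * x i)"
    using assms by (simp add: bin_tail_def sum.atLeast_Suc_atMost shift)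
  also have "(\<Sum>i = Suc (Suc e)..n. 2 powi (int e - int i) * x i) = bin_tail x n (Suc e) / 2"
    unfolding bin_tail_def sum_divide_distrib by (rule sum.cong) (simp_all add: shift)
  finally show ?thesis
    by (simp add: add_divide_distrib)
qed

lemma bin_head_Ints_nonneg:
  assumes "bits_upto n x" "e \<le> n"
  shows "bin_head x e \<in> \<int>" "0 \<le> bin_head x e"
proof -
  have "bin_head x e \<in> \<int> \<and> 0 \<le> bin_head x e"
    using assms(2)
  proof (induction e)
    case (Suc e)
    have "x (Suc e) \<in> {0, 1}" using assms(1) Suc.prems by (auto simp: bits_upto_def)
    then show ?case using Suc by (auto simp: bin_head_Suc)
  qed simp
  then show "bin_head x e \<in> \<int>" "0 \<le> bin_head x e" by auto
qed

lemma bin_tail_bounds: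
  assumes "bits_upto n x" "e \<le> n"
  shows "0 \<le> bin_tail x n e" "bin_tail x n e < 1"
proof -
  have "0 \<le> bin_tail x n e \<and> bin_tail x n e < 1"
    using assms(2)
  proof (induction e rule: inc_induct)
    case (step e)
    have "x (Suc e) \<in> {0, 1}" using assms(1) step.hyps by (auto simp: bits_upto_def)
    then show ?case using step.IH bin_tail_Suc[OF step.hyps(2), of x] by auto
  qed simp
  then show "0 \<le> bin_tail x n e" "bin_tail x n e < 1" by auto
qed

lemma bin_head_add_bin_tail:
  assumes "e \<le> n"
  shows "bin_head x e + bin_tail x n e = 2 ^ e * bin_tail x n 0"
  using assms
proof (induction e)
  case (Suc e)
  then show ?case
    using bin_tail_Suc[of e n x] by (simp add: bin_head_Suc field_simps)
qed simp

lemma bin_tail_scaled_Ints: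
  assumes "bits_upto n x" "e \<le> n"
  shows "bin_tail x n e * 2 ^ (n - e) \<in> \<int>"
proof -
  have "(2::real) ^ n = 2 ^ e * 2 ^ (n - e)"
    using assms(2) by (simp flip: power_add)
  then have "bin_tail x n e * 2 ^ (n - e) = 2 ^ n * bin_tail x n 0 - bin_head x e * 2 ^ (n - e)"
    using bin_head_add_bin_tail[OF assms(2), of x] by (simp add: algebra_simps flip: distrib_right)
  also have "2 ^ n * bin_tail x n 0 = bin_head x n"
    using bin_head_add_bin_tail[of n n x] by simp
  finally show ?thesis
    using bin_head_Ints_nonneg[OF assms(1)] assms(2) by auto
qed

lemma bin_tail_shift:
  assumes "bits_upto n x" "e + s \<le> n"
  shows "of_int \<lfloor>2 ^ s * bin_tail x n e\<rfloor> = bin_head x (e + s) - 2 ^ s * bin_head x e"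
    and "2 ^ s * bin_tail x n e - of_int \<lfloor>2 ^ s * bin_tail x n e\<rfloor> = bin_tail x n (e + s)"
proof -
  have "2 ^ s * (bin_head x e + bin_tail x n e) = bin_head x (e + s) + bin_tail x n (e + s)"
    using bin_head_add_bin_tail[of e n x] bin_head_add_bin_tail[of "e + s" n x] assms(2)
    by (simp add: power_add)
  then have split: "2 ^ s * bin_tail x n e
      = (bin_head x (e + s) - 2 ^ s * bin_head x e) + bin_tail x n (e + s)"
    by (simp add: algebra_simps)
  have "bin_head x (e + s) - 2 ^ s * bin_head x e \<in> \<int>"
    using bin_head_Ints_nonneg[OF assms(1)] assms(2) by auto
  then obtain q where q: "bin_head x (e + s) - 2 ^ s * bin_head x e = of_int q"
    by (auto elim: Ints_cases)
  have "\<lfloor>2 ^ s * bin_tail x n e\<rfloor> = q"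
    using bin_tail_bounds[OF assms(1), of "e + s"] assms(2) by (intro floor_unique) (auto simp: split q)
  then show "of_int \<lfloor>2 ^ s * bin_tail x n e\<rfloor> = bin_head x (e + s) - 2 ^ s * bin_head x e"
    and "2 ^ s * bin_tail x n e - of_int \<lfloor>2 ^ s * bin_tail x n e\<rfloor> = bin_tail x n (e + s)"
    using q split by auto
qed


lemma sum_thresholds_eq_floor:
  fixes r :: real
  assumes "0 < N" "0 \<le> r" "r < 1"
  shows "(\<Sum>t<N - 1. of_bool (real (Suc t) / real N \<le> r) :: real) = of_int \<lfloor>real N * r\<rfloor>"
proof -
  define f where "f = \<lfloor>real N * r\<rfloor>"
  have f_nonneg: "0 \<le> f" using assms by (simp add: f_def)
  have "real N * r < real N" using assms by simp
  then have f_less: "nat f < N" using f_nonneg unfolding f_def by linarith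
  have iff: "real (Suc t) / real N \<le> r \<longleftrightarrow> t < nat f" for t
  proof -
    have "real (Suc t) / real N \<le> r \<longleftrightarrow> real (Suc t) \<le> real N * r"
      using assms(1) by (simp add: divide_le_eq mult.commute)
    also have "\<dots> \<longleftrightarrow> int (Suc t) \<le> f" unfolding f_def
      by (metis le_floor_iff of_int_of_nat_eq)
    finally show ?thesis using f_nonneg by linarith
  qed
  have "(\<Sum>t<N - 1. of_bool (real (Suc t) / real N \<le> r) :: real)
      = (\<Sum>t<N - 1. if t < nat f then 1 else 0)"
    by (simp only: iff of_bool_def)
  also have "\<dots> = (\<Sum>t\<in>{t \<in> {..<N - 1}. t < nat f}. 1)"
    by (rule sum.inter_filter[symmetric]) simp
  also have "{t \<in> {..<N - 1}. t < nat f} = {..<nat f}" using f_less by auto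
  finally show ?thesis using f_nonneg by (simp add: f_def)
qed

lemma sum_multiples_reindex:
  fixes g :: "nat \<Rightarrow> 'a::comm_monoid_add"
  assumes "0 < c"
  shows "(\<Sum>t<c * N - 1. if c dvd Suc t then g (Suc t) else 0) = (\<Sum>u<N - 1. g (c * Suc u))"
proof -
  define h where "h u = c * Suc u - 1" for u
  have Suc_h: "Suc (h u) = c * Suc u" for u using assms by (simp add: h_def)
  have image: "{t \<in> {..<c * N - 1}. c dvd Suc t} = h ` {..<N - 1}"
  proof (intro equalityI subsetI)
    fix t assume "t \<in> {t \<in> {..<c * N - 1}. c dvd Suc t}"
    then obtain q where t: "t < c * N - 1" "Suc t = c * q" by (auto elim: dvdE)
    then have "c * q < c * N" by linarith
    then have "0 < q" "q < N" using t(2) by (auto intro: Nat.gr0I)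
    moreover have "h (q - 1) = t" using t \<open>0 < q\<close> by (simp add: h_def)
    ultimately show "t \<in> h ` {..<N - 1}" by force
  next
    fix t assume "t \<in> h ` {..<N - 1}"
    then obtain u where u: "u < N - 1" "t = h u" by auto
    then have "c * Suc u < c * N" using assms by (intro mult_strict_left_mono) auto
    then show "t \<in> {t \<in> {..<c * N - 1}. c dvd Suc t}"
      using Suc_h[of u] u by auto
  qed
  have inj: "inj_on h {..<N - 1}"
    by (rule inj_onI) (metis Suc_h Suc_inject assms mult_cancel1 not_gr0)
  have "(\<Sum>t<c * N - 1. if c dvd Suc t then g (Suc t) else 0)
      = (\<Sum>t\<in>{t \<in> {..<c * N - 1}. c dvd Suc t}. g (Suc t))"
    by (rule sum.inter_filter[symmetric]) simp
  also have "\<dots> = (\<Sum>u<N - 1. g (Suc (h u)))"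
    unfolding image using inj by (simp add: sum.reindex)
  finally show ?thesis by (simp add: Suc_h)
qed

text \<open>On the grid \<open>\<int>/D\<close> the ramp of width \<open>1/D\<close> ending at the threshold is an exact step.\<close>

lemma relu_ramp_indicator:
  fixes r \<theta> D :: real
  assumes "r * D \<in> \<int>" "\<theta> * D \<in> \<int>" "0 < D"
  shows "D * max (r - \<theta> + 1 / D) 0 - D * max (r - \<theta>) 0 = of_bool (\<theta> \<le> r)"
proof (cases "\<theta> \<le> r")
  case True
  have "0 \<le> r - \<theta> + 1 / D" using True assms(3) by (simp add: add_nonneg_pos)
  then show ?thesis using True assms(3) by (simp add: algebra_simps)
next
  case False
  have "r * D - \<theta> * D \<in> \<int>" using assms by auto
  then obtain z where z: "r * D - \<theta> * D = of_int z" by (auto elim: Ints_cases)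
  have "r * D < \<theta> * D" using False assms(3) by simp
  then have "z \<le> -1" using z by linarith
  then have "r * D - \<theta> * D \<le> -1" using z by simp
  then have "(r - \<theta> + 1 / D) * D \<le> 0" using assms(3) by (simp add: algebra_simps)
  then have "r - \<theta> + 1 / D \<le> 0" using assms(3) by (simp add: mult_le_0_iff)
  then show ?thesis using False by simp
qed


definition lincomb :: "(nat \<Rightarrow> real) \<Rightarrow> real list \<Rightarrow> real" where
  "lincomb \<alpha> v = (\<Sum>j<length v. \<alpha> j * v ! j)"

lemma lincomb_add: "lincomb (\<lambda>j. \<alpha> j + \<beta> j) v = lincomb \<alpha> v + lincomb \<beta> v"
  by (simp add: lincomb_def distrib_right sum.distrib)

lemma lincomb_diff: "lincomb (\<lambda>j. \<alpha> j - \<beta> j) v = lincomb \<alpha> v - lincomb \<beta> v"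
  by (simp add: lincomb_def left_diff_distrib sum_subtractf)

lemma lincomb_scale: "lincomb (\<lambda>j. c * \<alpha> j) v = c * lincomb \<alpha> v"
  by (simp add: lincomb_def sum_distrib_left mult.assoc)

lemma lincomb_unit: "i < length v \<Longrightarrow> lincomb (\<lambda>j. if j = i then c else 0) v = c * v ! i"
  by (simp add: lincomb_def if_distrib[of "\<lambda>x. x * _"] sum.delta cong: if_cong)

definition layer_of :: "nat \<Rightarrow> nat \<Rightarrow> (nat \<Rightarrow> nat \<Rightarrow> real) \<Rightarrow> (nat \<Rightarrow> real)
    \<Rightarrow> real list list \<times> real list" where
  "layer_of r c F G = (map (\<lambda>i. map (F i) [0..<c]) [0..<r], map G [0..<r])"

lemma layer_of_shape:
  "is_matrix r c (fst (layer_of r c F G))" "length (snd (layer_of r c F G)) = r"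
  by (auto simp: layer_of_def is_matrix_def)

lemma affine_layer_of:
  assumes "length v = c"
  shows "affine (fst (layer_of r c F G)) (snd (layer_of r c F G)) v
    = map (\<lambda>i. lincomb (F i) v + G i) [0..<r]"
  using assms by (auto simp: affine_def layer_of_def lincomb_def intro!: sum.cong)

definition hidden_out :: "(real list list \<times> real list) list \<Rightarrow> real list \<Rightarrow> real list" where
  "hidden_out hs x = foldl (\<lambda>v l. relu_vec (affine (fst l) (snd l) v)) x hs"

lemma hidden_out_snoc:
  "hidden_out (hs @ [l]) x = relu_vec (affine (fst l) (snd l) (hidden_out hs x))"
  by (simp add: hidden_out_def)

lemma realize_snoc: "realize (hs @ [l]) x = affine (fst l) (snd l) (hidden_out hs x)"
proof (induction hs arbitrary: x)
  case Nil
  then show ?case by (cases l) (simp add: hidden_out_def)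
next
  case (Cons h hs)
  obtain A b where h: "h = (A, b)" by (cases h)
  obtain l' ls where "hs @ [l] = l' # ls" by (cases "hs @ [l]") auto
  then have "realize (h # hs @ [l]) x = realize (hs @ [l]) (relu_vec (affine A b x))"
    by (simp add: h)
  then show ?case using Cons by (simp add: hidden_out_def h)
qed

lemma realize_snoc_linear_output:
  assumes "length (hidden_out hs x) = w"
  shows "realize (hs @ [layer_of k w F (\<lambda>_. 0)]) x = map (\<lambda>i. lincomb (F i) (hidden_out hs x)) [0..<k]"
  using assms by (simp add: realize_snoc affine_layer_of)

definition hidden_shape :: "nat list \<Rightarrow> (real list list \<times> real list) list \<Rightarrow> bool" where
  "hidden_shape Ns hs \<longleftrightarrow> length Ns = length hs + 1 \<and>
     (\<forall>l < length hs. is_matrix (Ns ! (l + 1)) (Ns ! l) (fst (hs ! l))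
                      \<and> length (snd (hs ! l)) = Ns ! (l + 1))"

lemma hidden_shape_Nil: "hidden_shape [d] []"
  by (simp add: hidden_shape_def)

lemma hidden_shape_snoc:
  assumes "hidden_shape Ns hs" "is_matrix k (last Ns) (fst l)" "length (snd l) = k"
  shows "hidden_shape (Ns @ [k]) (hs @ [l])"
proof -
  have len: "length Ns = length hs + 1" using assms(1) by (simp add: hidden_shape_def)
  then have "Ns ! length hs = last Ns" by (subst last_conv_nth) auto
  then show ?thesis
    using assms len unfolding hidden_shape_def by (auto simp: nth_append less_Suc_eq)
qed

lemma realize_in_NN:
  assumes "hidden_shape (d # ws) hs" "length ws = L" "\<forall>w \<in> set ws. w \<le> W"
    and "is_matrix k (last (d # ws)) (fst out)" "length (snd out) = k"
  shows "realize (hs @ [out]) \<in> NN d k W L"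
proof -
  have shape: "hidden_shape (d # ws @ [k]) (hs @ [out])"
    using hidden_shape_snoc[OF assms(1,4,5)] by simp
  have len: "length hs = L" using shape assms(2) by (simp add: hidden_shape_def)
  have "wf_net d k W L (d # ws @ [k]) (hs @ [out])"
    unfolding wf_net_def
  proof (intro conjI)
    show "\<forall>l\<le>L. is_matrix ((d # ws @ [k]) ! (l + 1)) ((d # ws @ [k]) ! l) (fst ((hs @ [out]) ! l))
        \<and> length (snd ((hs @ [out]) ! l)) = (d # ws @ [k]) ! (l + 1)"
      using shape len unfolding hidden_shape_def by (simp add: less_Suc_eq_le)
    show "\<forall>l\<in>{1..L}. (d # ws @ [k]) ! l \<le> W"
      using assms(2,3) by (auto simp: nth_Cons' nth_append)
  qed (use assms(2) len in \<open>auto simp: nth_append\<close>)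
  then show ?thesis unfolding NN_def by blast
qed


section \<open>The staircase layer\<close>

text \<open>The neurons of a staircase layer come in pairs \<open>2 + 2t, 3 + 2t\<close> after the two neurons
  \<open>0, 1\<close>; \<open>pair_coef g\<close> reads off the pair differences with weights \<open>g t\<close>.\<close>

definition pair_coef :: "(nat \<Rightarrow> real) \<Rightarrow> nat \<Rightarrow> real" where
  "pair_coef g j = (if j < 2 then 0 else if even j then g ((j - 2) div 2) else - g ((j - 2) div 2))"

lemma sum_pair_coef:
  "(\<Sum>j<2 + 2 * K. pair_coef g j * u j) = (\<Sum>t<K. g t * (u (2 + 2 * t) - u (3 + 2 * t)))"
proof (induction K)
  case (Suc K)
  have "{..<2 + 2 * Suc K} = insert (3 + 2 * K) (insert (2 + 2 * K) {..<2 + 2 * K})"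
    by auto
  moreover have "(3 + 2 * K - 2) div 2 = K" by simp
  ultimately show ?case
    using Suc by (simp add: pair_coef_def right_diff_distrib)
qed (simp add: pair_coef_def lessThan_Suc)

text \<open>The staircase layer of step \<open>s\<close> on the grid \<open>2\<^sup>-\<^sup>k\<close>: neuron 0 copies the head, neuron 1
  the tail \<open>r\<close>, and neurons \<open>2 + 2t\<close>, \<open>3 + 2t\<close> are the two ReLUs of the ramp at \<open>(t+1)/2\<^sup>s\<close>.\<close>

definition staircase_bias :: "nat \<Rightarrow> nat \<Rightarrow> nat \<Rightarrow> real" where
  "staircase_bias s k i =
    (if i < 2 then 0 else (if even i then 1 / 2 ^ k else 0) - real (Suc ((i - 2) div 2)) / 2 ^ s)"

definition staircase_layer :: "nat \<Rightarrow> nat \<Rightarrow> nat \<Rightarrow> (nat \<Rightarrow> real) \<Rightarrow> (nat \<Rightarrow> real)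
    \<Rightarrow> real list list \<times> real list" where
  "staircase_layer s k w \<alpha> \<beta> = layer_of (2 * 2 ^ s) w (\<lambda>i. if i = 0 then \<alpha> else \<beta>) (staircase_bias s k)"

definition floor_readout :: "nat \<Rightarrow> nat \<Rightarrow> nat \<Rightarrow> nat \<Rightarrow> real" where
  "floor_readout s k j = pair_coef (\<lambda>t. if 2 ^ (s - j) dvd Suc t then 2 ^ k else 0)"

definition head_readout :: "nat \<Rightarrow> nat \<Rightarrow> nat \<Rightarrow> real" where
  "head_readout s k i = (if i = 0 then 2 ^ s else 0) + floor_readout s k s i"

definition tail_readout :: "nat \<Rightarrow> nat \<Rightarrow> nat \<Rightarrow> real" where
  "tail_readout s k i = (if i = 1 then 2 ^ s else 0) - floor_readout s k s i"

lemma two_mult_power_two: "(2::nat) * 2 ^ s = 2 + 2 * (2 ^ s - 1)"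
proof -
  have "(1::nat) \<le> 2 ^ s" by simp
  then show ?thesis by linarith
qed

lemma staircase_layer_output:
  assumes "length v = w" "lincomb \<alpha> v = a" "lincomb \<beta> v = r"
    and "0 \<le> a" "0 \<le> r" "r * 2 ^ k \<in> \<int>" "s \<le> k"
  defines "h \<equiv> relu_vec (affine (fst (staircase_layer s k w \<alpha> \<beta>)) (snd (staircase_layer s k w \<alpha> \<beta>)) v)"
  shows "length h = 2 * 2 ^ s" "h ! 0 = a" "h ! 1 = r"
    and "\<And>t::nat. t < 2 ^ s - 1 \<Longrightarrow> 2 ^ k * (h ! (2 + 2 * t) - h ! (3 + 2 * t)) = of_bool (real (Suc t) / 2 ^ s \<le> r)"
proof -
  have h: "h = map (\<lambda>i. max ((if i = 0 then a else r) + staircase_bias s k i) 0) [0..<2 * 2 ^ s]"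
    unfolding h_def staircase_layer_def using assms(1-3)
    by (simp add: affine_layer_of relu_vec_def if_distrib[of "\<lambda>f. lincomb f v"] cong: if_cong)
  show "length h = 2 * 2 ^ s" by (simp add: h)
  have "(0::nat) < 2 * 2 ^ s" "(1::nat) < 2 * 2 ^ s" using two_mult_power_two[of s] by linarith+
  then show "h ! 0 = a" "h ! 1 = r"
    using assms(4,5) by (simp_all add: h staircase_bias_def del: nth_map_upt)
  fix t :: nat assume t: "t < 2 ^ s - 1"
  define \<theta> where "\<theta> = real (Suc t) / 2 ^ s"
  have "2 + 2 * t < 2 * 2 ^ s" "3 + 2 * t < 2 * 2 ^ s" using t two_mult_power_two[of s] by linarith+
  moreover have "(3 + 2 * t - 2) div 2 = t" by simp
  ultimately have ramp: "h ! (2 + 2 * t) = max (r - \<theta> + 1 / 2 ^ k) 0" "h ! (3 + 2 * t) = max (r - \<theta>) 0"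
    by (simp_all add: h staircase_bias_def \<theta>_def del: nth_map_upt)
  have "(2::real) ^ k = 2 ^ s * 2 ^ (k - s)" using assms(7) by (simp flip: power_add)
  then have "\<theta> * 2 ^ k \<in> \<int>" by (simp add: \<theta>_def)
  then show "2 ^ k * (h ! (2 + 2 * t) - h ! (3 + 2 * t)) = of_bool (real (Suc t) / 2 ^ s \<le> r)"
    unfolding ramp right_diff_distrib using relu_ramp_indicator[OF assms(6), of \<theta>] by (simp add: \<theta>_def)
qed

lemma staircase_floor_readout:
  assumes "length v = w" "lincomb \<alpha> v = a" "lincomb \<beta> v = r"
    and "0 \<le> a" "0 \<le> r" "r < 1" "r * 2 ^ k \<in> \<int>" "s \<le> k" "j \<le> s"
  defines "h \<equiv> relu_vec (affine (fst (staircase_layer s k w \<alpha> \<beta>)) (snd (staircase_layer s k w \<alpha> \<beta>)) v)"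
  shows "lincomb (floor_readout s k j) h = of_int \<lfloor>2 ^ j * r\<rfloor>"
proof -
  note out = staircase_layer_output[OF assms(1-5,7,8), folded h_def]
  define c :: nat where "c = 2 ^ (s - j)"
  have c: "0 < c" "(2::nat) ^ s = c * 2 ^ j" using assms(9) by (simp_all add: c_def flip: power_add)
  have "lincomb (floor_readout s k j) h
      = (\<Sum>t<2 ^ s - 1. (if c dvd Suc t then 2 ^ k else 0) * (h ! (2 + 2 * t) - h ! (3 + 2 * t)))"
    unfolding lincomb_def out(1) two_mult_power_two floor_readout_def c_def by (rule sum_pair_coef)
  also have "\<dots> = (\<Sum>t<c * 2 ^ j - 1. if c dvd Suc t then of_bool (real (Suc t) / 2 ^ s \<le> r) else 0)"
    using out(4) by (intro sum.cong) (simp_all add: c(2))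
  also have "\<dots> = (\<Sum>u<2 ^ j - 1. of_bool (real (c * Suc u) / 2 ^ s \<le> r))"
    by (rule sum_multiples_reindex[OF c(1)])
  also have "\<dots> = (\<Sum>u<2 ^ j - 1. of_bool (real (Suc u) / real (2 ^ j) \<le> r))"
  proof -
    have "real (c * Suc u) / 2 ^ s = real (Suc u) / real (2 ^ j)" for u
      using c(1) by (simp add: c(2)[THEN arg_cong[where f = real], simplified] field_simps)
    then show ?thesis by simp
  qed
  also have "\<dots> = of_int \<lfloor>2 ^ j * r\<rfloor>"
    using sum_thresholds_eq_floor[of "2 ^ j" r] assms(5,6) by simp
  finally show ?thesis .
qed

lemma staircase_head_tail_readout:
  assumes "length v = w" "lincomb \<alpha> v = a" "lincomb \<beta> v = r"
    and "0 \<le> a" "0 \<le> r" "r < 1" "r * 2 ^ k \<in> \<int>" "s \<le> k"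
  defines "h \<equiv> relu_vec (affine (fst (staircase_layer s k w \<alpha> \<beta>)) (snd (staircase_layer s k w \<alpha> \<beta>)) v)"
  shows "lincomb (head_readout s k) h = 2 ^ s * a + of_int \<lfloor>2 ^ s * r\<rfloor>"
    and "lincomb (tail_readout s k) h = 2 ^ s * r - of_int \<lfloor>2 ^ s * r\<rfloor>"
proof -
  note out = staircase_layer_output[OF assms(1-5,7,8), folded h_def]
  note floor = staircase_floor_readout[OF assms(1-8) order_refl, folded h_def]
  have "0 < length h" "1 < length h" using out(1) two_mult_power_two[of s] by linarith+
  then show "lincomb (head_readout s k) h = 2 ^ s * a + of_int \<lfloor>2 ^ s * r\<rfloor>"
    and "lincomb (tail_readout s k) h = 2 ^ s * r - of_int \<lfloor>2 ^ s * r\<rfloor>"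
    unfolding head_readout_def tail_readout_def lincomb_add lincomb_diff
    by (simp_all add: lincomb_unit floor out(2) out(3)[simplified])
qed


section \<open>Networks reading bits\<close>

definition reads_head_tail :: "nat \<Rightarrow> nat \<Rightarrow> nat \<Rightarrow> (real list list \<times> real list) list
    \<Rightarrow> (nat \<Rightarrow> real) \<Rightarrow> (nat \<Rightarrow> real) \<Rightarrow> bool" where
  "reads_head_tail n e w hs \<alpha> \<beta> \<longleftrightarrow> (\<forall>x. bits_upto n x \<longrightarrow>
     length (hidden_out hs [bin_tail x n 0]) = w \<and>
     lincomb \<alpha> (hidden_out hs [bin_tail x n 0]) = bin_head x e \<and>
     lincomb \<beta> (hidden_out hs [bin_tail x n 0]) = bin_tail x n e)"

lemma reads_head_tail_Nil: "reads_head_tail n 0 1 [] (\<lambda>_. 0) (\<lambda>_. 1)"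
  by (simp add: reads_head_tail_def hidden_out_def lincomb_def)

lemma reads_head_tail_snoc_staircase:
  assumes "reads_head_tail n e w hs \<alpha> \<beta>" "e + s \<le> n"
  shows "reads_head_tail n (e + s) (2 * 2 ^ s) (hs @ [staircase_layer s (n - e) w \<alpha> \<beta>])
           (head_readout s (n - e)) (tail_readout s (n - e))"
  unfolding reads_head_tail_def
proof (intro allI impI)
  fix x assume x: "bits_upto n x"
  have e: "e \<le> n" using assms(2) by simp
  have h: "length (hidden_out hs [bin_tail x n 0]) = w"
    "lincomb \<alpha> (hidden_out hs [bin_tail x n 0]) = bin_head x e"
    "lincomb \<beta> (hidden_out hs [bin_tail x n 0]) = bin_tail x n e"
    using assms(1) x by (auto simp: reads_head_tail_def)
  note facts = h bin_head_Ints_nonneg(2)[OF x e] bin_tail_bounds[OF x e]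
    bin_tail_scaled_Ints[OF x e]
  have s: "s \<le> n - e" using assms(2) by simp
  note out = staircase_layer_output(1)[OF facts(1-5,7) s] staircase_head_tail_readout[OF facts s]
  show "length (hidden_out (hs @ [staircase_layer s (n - e) w \<alpha> \<beta>]) [bin_tail x n 0]) = 2 * 2 ^ s \<and>
    lincomb (head_readout s (n - e)) (hidden_out (hs @ [staircase_layer s (n - e) w \<alpha> \<beta>]) [bin_tail x n 0])
      = bin_head x (e + s) \<and>
    lincomb (tail_readout s (n - e)) (hidden_out (hs @ [staircase_layer s (n - e) w \<alpha> \<beta>]) [bin_tail x n 0])
      = bin_tail x n (e + s)"
    using bin_tail_shift[OF x assms(2)] by (simp add: hidden_out_snoc out)
qed

lemma staircase_net_exists:
  assumes "sum_list ss \<le> n"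
  shows "\<exists>hs \<alpha> \<beta>. hidden_shape (1 # map (\<lambda>s. 2 * 2 ^ s) ss) hs \<and>
           reads_head_tail n (sum_list ss) (last (1 # map (\<lambda>s. 2 * 2 ^ s) ss)) hs \<alpha> \<beta>"
  using assms
proof (induction ss rule: rev_induct)
  case Nil
  show ?case using hidden_shape_Nil[of 1] reads_head_tail_Nil[of n] by (simp, blast)
next
  case (snoc s ss)
  define e where "e = sum_list ss"
  define w :: nat where "w = last (1 # map (\<lambda>s. 2 * 2 ^ s) ss)"
  have es: "e + s \<le> n" using snoc.prems by (simp add: e_def)
  then obtain hs \<alpha> \<beta> where hs: "hidden_shape (1 # map (\<lambda>s. 2 * 2 ^ s) ss) hs"
      and reads: "reads_head_tail n e w hs \<alpha> \<beta>"
    using snoc.IH unfolding e_def w_def by auto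
  define l where "l = staircase_layer s (n - e) w \<alpha> \<beta>"
  have "hidden_shape (1 # map (\<lambda>s. 2 * 2 ^ s) ss @ [2 * 2 ^ s]) (hs @ [l])"
    using hidden_shape_snoc[OF hs] by (simp add: l_def staircase_layer_def layer_of_shape w_def)
  moreover have "reads_head_tail n (sum_list (ss @ [s])) (2 * 2 ^ s) (hs @ [l])
      (head_readout s (n - e)) (tail_readout s (n - e))"
    using reads_head_tail_snoc_staircase[OF reads es] by (simp add: l_def e_def)
  ultimately show ?case by auto
qed

lemma exists_bounded_split:
  "m \<le> L * c \<Longrightarrow> \<exists>ss. length ss = L \<and> sum_list ss = m \<and> (\<forall>s \<in> set ss. s \<le> c)"
proof (induction L arbitrary: m)
  case (Suc L)
  have "m - min c m \<le> L * c" using Suc.prems by auto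
  then obtain ss where "length ss = L" "sum_list ss = m - min c m" "\<forall>s \<in> set ss. s \<le> c"
    using Suc.IH by blast
  then show ?case by (intro exI[of _ "min c m # ss"]) auto
qed simp

lemma le_mult_nat_ceiling_divide:
  assumes "0 < L"
  shows "m \<le> L * nat \<lceil>real m / real L\<rceil>"
proof -
  have "real m = real L * (real m / real L)"
    using assms by simp
  also have "\<dots> \<le> real L * of_int \<lceil>real m / real L\<rceil>"
    by (intro mult_left_mono le_of_int_ceiling) simp
  also have "of_int \<lceil>real m / real L\<rceil> = real (nat \<lceil>real m / real L\<rceil>)"
    by simp
  finally show ?thesis by (metis of_nat_le_iff of_nat_mult)
qed

lemma deep_head_tail_net:
  assumes "m \<le> n" "0 < L"
  shows "\<exists>f \<in> NN 1 2 (2 ^ (nat \<lceil>real m / real L\<rceil> + 2) + 2) L.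
           \<forall>x. bits_upto n x \<longrightarrow> f [bin_tail x n 0] = [bin_head x m, bin_tail x n m]"
proof -
  define c where "c = nat \<lceil>real m / real L\<rceil>"
  obtain ss where ss: "length ss = L" "sum_list ss = m" "\<forall>s \<in> set ss. s \<le> c"
    using exists_bounded_split le_mult_nat_ceiling_divide[OF assms(2)] unfolding c_def by blast
  define ws :: "nat list" where "ws = map (\<lambda>s. 2 * 2 ^ s) ss"
  obtain hs \<alpha> \<beta> where hs: "hidden_shape (1 # ws) hs" and reads: "reads_head_tail n m (last (1 # ws)) hs \<alpha> \<beta>"
    using staircase_net_exists[of ss n] ss(2) assms(1) unfolding ws_def by auto
  define out where "out = layer_of 2 (last (1 # ws)) (\<lambda>i. if i = 0 then \<alpha> else \<beta>) (\<lambda>_. 0)"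
  have "\<forall>w \<in> set ws. w \<le> 2 ^ (c + 2) + 2"
  proof
    fix w assume "w \<in> set ws"
    then obtain s where "s \<le> c" "w = 2 * 2 ^ s" using ss(3) by (auto simp: ws_def)
    then have "w \<le> 2 * 2 ^ c" by simp
    then show "w \<le> 2 ^ (c + 2) + 2" by simp
  qed
  then have "realize (hs @ [out]) \<in> NN 1 2 (2 ^ (c + 2) + 2) L"
    using realize_in_NN[OF hs] ss(1) by (simp add: ws_def out_def layer_of_shape)
  moreover have "realize (hs @ [out]) [bin_tail x n 0] = [bin_head x m, bin_tail x n m]"
    if "bits_upto n x" for x
    using that reads unfolding out_def reads_head_tail_def
    by (simp add: realize_snoc_linear_output upt_rec)
  ultimately show ?thesis unfolding c_def by blast
qed

lemma shallow_bit_net: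
  assumes "m \<le> n"
  shows "\<exists>f \<in> NN 1 (m + 1) (2 ^ (m + 2) + 1) 1.
           \<forall>x. bits_upto n x \<longrightarrow> f [bin_tail x n 0] = map x [1..<m + 1] @ [bin_tail x n m]"
proof -
  define l where "l = staircase_layer m n 1 (\<lambda>_. 0) (\<lambda>_. 1)"
  define F where "F i = (if i < m then (\<lambda>j. floor_readout m n (Suc i) j - 2 * floor_readout m n i j)
    else tail_readout m n)" for i
  define out where "out = layer_of (m + 1) (2 * 2 ^ m) F (\<lambda>_. 0)"
  have "hidden_shape [1, 2 * 2 ^ m] [l]"
    using hidden_shape_snoc[OF hidden_shape_Nil] by (simp add: l_def staircase_layer_def layer_of_shape)
  then have "realize ([l] @ [out]) \<in> NN 1 (m + 1) (2 ^ (m + 2) + 1) 1"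
    by (rule realize_in_NN) (simp_all add: out_def layer_of_shape)
  moreover have "realize ([l] @ [out]) [bin_tail x n 0] = map x [1..<m + 1] @ [bin_tail x n m]"
    if x: "bits_upto n x" for x
  proof -
    define h where "h = hidden_out [l] [bin_tail x n 0]"
    have "reads_head_tail n m (2 * 2 ^ m) [l] (head_readout m n) (tail_readout m n)"
      using reads_head_tail_snoc_staircase[OF reads_head_tail_Nil, of "m" n] assms by (simp add: l_def)
    then have len: "length h = 2 * 2 ^ m" and tail: "lincomb (tail_readout m n) h = bin_tail x n m"
      using x by (auto simp: reads_head_tail_def h_def)
    have head: "lincomb (floor_readout m n j) h = bin_head x j" if "j \<le> m" for j
      using staircase_floor_readout[of "[bin_tail x n 0]" 1 "\<lambda>_. 0" 0 "\<lambda>_. 1" "bin_tail x n 0" n m j]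
        bin_tail_bounds[OF x, of 0] bin_tail_scaled_Ints[OF x, of 0] bin_tail_shift(1)[OF x, of 0 j]
        that assms
      by (simp add: h_def hidden_out_def l_def lincomb_def)
    have "lincomb (F i) h = (map x [1..<m + 1] @ [bin_tail x n m]) ! i" if "i < m + 1" for i
    proof (cases "i < m")
      case True
      then have "lincomb (F i) h = bin_head x (Suc i) - 2 * bin_head x i"
        by (simp add: F_def lincomb_diff lincomb_scale head)
      then show ?thesis using True by (simp add: bin_head_Suc nth_append del: upt_Suc)
    qed (use that tail in \<open>simp add: F_def nth_append\<close>)
    then show ?thesis
      unfolding out_def realize_snoc_linear_output[OF len[unfolded h_def]] h_def[symmetric]
      by (intro nth_equalityI) (simp_all del: upt_Suc)
  qed
  ultimately show ?thesis by blast
qed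

theorem mainTheorem5:
  fixes m n :: nat
  assumes "1 \<le> m" and "m \<le> n"
  shows "(\<exists>f \<in> NN 1 (m + 1) (2 ^ (m + 2) + 1) 1.
            \<forall>x :: nat \<Rightarrow> real. (\<forall>i \<in> {1..n}. x i \<in> {0, 1}) \<longrightarrow>
              f [\<Sum>i = 1..n. 2 powi (- int i) * x i]
                = map x [1..<m + 1] @ [\<Sum>i = m + 1..n. 2 powi (int m - int i) * x i])
       \<and> (\<forall>L :: nat. 1 \<le> L \<longrightarrow>
           (\<exists>f \<in> NN 1 2 (2 ^ (nat \<lceil>real m / real L\<rceil> + 2) + 2) L.
              \<forall>x :: nat \<Rightarrow> real. (\<forall>i \<in> {1..n}. x i \<in> {0, 1}) \<longrightarrow>
                f [\<Sum>i = 1..n. 2 powi (- int i) * x i]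
                  = [\<Sum>i = 1..m. 2 powi (int m - int i) * x i,
                     \<Sum>i = m + 1..n. 2 powi (int m - int i) * x i]))"
  \<comment> \<open>The construction also covers \<open>m = 0\<close>.\<close>
  using shallow_bit_net[OF assms(2)] deep_head_tail_net[OF assms(2)]
  unfolding bits_upto_def bin_head_def bin_tail_def by simp

end
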